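(* Let $(\Omega,\mathcal A)$ be a Borel space, $(\Omega,X_\bullet)$ a Borel field of proper metric spaces, and $(F^n_\bullet)_{n\ge1}$ a sequence of Borel subfields such that each $F^n_\omega$ is closed. Then the subfield $\bigcap_n F^n_\bullet$, defined by $\omega\mapsto\bigcap_{n\ge1}F^n_\omega$, is a Borel subfield.
   Context: Borel field of metric spaces: $(X_\omega,d_\omega)_{\omega\in\Omega}$ metric spaces; a section is $x_\bullet=(x_\omega)$, $x_\omega\in X_\omega$. A Borel structure is a set $\mathcal L(\Omega,X_\bullet)$ of sections such that (a) $\omega\mapsto d_\omega(x_\omega,y_\omega)$ is Borel for all $x_\bullet,y_\bullet\in\mathcal L$; (b) any section $y_\bullet$ with $\omega\mapsto d_\omega(x_\omega,y_\omega)$ Borel for all $x_\bullet\in\mathcal L$ lies in $\mathcal L$; (c) there is a countable $\mathcal D=\{x^n_\bullet\}\subseteq\mathcal L$ (fundamental family) with $\{x^n_\omega\}_n$ dense in $X_\omega$ for all $\omega$. For Borel $\Omega'$, $\mathcal L(\Omega',X_\bullet)$ = restrictions to $\Omega'$ of Borel sections. A subfield is $A_\bullet=(A_\omega)$ with $A_\omega\subseteq X_\omega$ (possibly empty); it is Borel if $\Omega'=\{\omega:A_\omega\ne\emptyset\}\in\mathcal A$ and there are countably many $y^n_\bullet\in\mathcal L(\Omega',X_\bullet)$ with $y^n_\omega\in A_\omega$ and $A_\omega\subseteq\overline{\{y^n_\omega\}_n}$ for all $\omega\in\Omega'$. Proper: closed balls are compact. *)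

theory Defs
  imports "HOL-Analysis.Analysis"
begin

definition is_section :: "'w measure \<Rightarrow> ('w \<Rightarrow> 'a metric) \<Rightarrow> ('w \<Rightarrow> 'a) \<Rightarrow> bool" where
  "is_section M X x \<longleftrightarrow> (\<forall>w\<in>space M. x w \<in> mspace (X w))"

definition dist_fun :: "('w \<Rightarrow> 'a metric) \<Rightarrow> ('w \<Rightarrow> 'a) \<Rightarrow> ('w \<Rightarrow> 'a) \<Rightarrow> 'w \<Rightarrow> real" where
  "dist_fun X x y = (\<lambda>w. mdist (X w) (x w) (y w))"

definition borel_structure ::
  "'w measure \<Rightarrow> ('w \<Rightarrow> 'a metric) \<Rightarrow> ('w \<Rightarrow> 'a) set \<Rightarrow> bool" where
  "borel_structure M X L \<longleftrightarrow>
     (\<forall>x\<in>L. is_section M X x) \<and>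
     (\<forall>x\<in>L. \<forall>y\<in>L. dist_fun X x y \<in> borel_measurable M) \<and>
     (\<forall>y. is_section M X y \<and> (\<forall>x\<in>L. dist_fun X x y \<in> borel_measurable M) \<longrightarrow> y \<in> L) \<and>
     (\<exists>D. countable D \<and> D \<subseteq> L \<and>
        (\<forall>w\<in>space M. mtopology_of (X w) closure_of {x w |x. x \<in> D} = mspace (X w)))"

definition proper_metric :: "'a metric \<Rightarrow> bool" where
  "proper_metric m \<longleftrightarrow> (\<forall>x\<in>mspace m. \<forall>r. compactin (mtopology_of m) (mcball_of m x r))"

definition borel_subfield ::
  "'w measure \<Rightarrow> ('w \<Rightarrow> 'a metric) \<Rightarrow> ('w \<Rightarrow> 'a) set \<Rightarrow> ('w \<Rightarrow> 'a set) \<Rightarrow> bool" where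
  "borel_subfield M X L A \<longleftrightarrow>
     (\<forall>w\<in>space M. A w \<subseteq> mspace (X w)) \<and>
     (let \<Omega>' = {w\<in>space M. A w \<noteq> {}} in
       \<Omega>' \<in> sets M \<and>
       (\<exists>Y. countable Y \<and>
          (\<forall>y\<in>Y. \<exists>x\<in>L. \<forall>w\<in>\<Omega>'. y w = x w) \<and>
          (\<forall>w\<in>\<Omega>'. (\<forall>y\<in>Y. y w \<in> A w) \<and>
                   A w \<subseteq> mtopology_of (X w) closure_of {y w |y. y \<in> Y})))"

end

theory Submission
  imports Defs
begin

(* A closed subfield G is Borel as soon as, for every Borel section c and
   radius r, the set of points where G meets the closed ball of radius r around c is
   measurable.  Given this, a measurable selection is built by a greedy chain along a
   fixed dense sequence D: the chain is measurable, Cauchy with geometric steps and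
   converges by properness to a point of the closed fibre G w; varying the starting
   index and the radius yields a countable dense family of Borel sections.  For the
   intersection, whether it meets a closed ball is characterised, using properness and
   the dense sequences of the F n, by a condition involving only countably many distances
   between Borel sections, hence is measurable. *)

lemma closure_of_mdist_approx:
  assumes "x \<in> mtopology_of m closure_of S" and "r > 0"
  obtains y where "y \<in> S" "mdist m x y < r"
proof -
  interpret Metric_space "mspace m" "mdist m" by simp
  show ?thesis using assms that by (auto simp: mtopology_of_def metric_closure_of)
qed

lemma in_closure_of_mdist:
  assumes x: "x \<in> mspace m" and S: "S \<subseteq> mspace m"
    and near: "\<And>e. e > 0 \<Longrightarrow> \<exists>y\<in>S. mdist m x y < e"
  shows "x \<in> mtopology_of m closure_of S"
proof -
  interpret Metric_space "mspace m" "mdist m" by simp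
  have "\<exists>y\<in>S. y \<in> mball x e" if "e > 0" for e
    using near[OF that] S x by auto
  then show ?thesis using x by (simp add: mtopology_of_def metric_closure_of)
qed

lemma limitin_The:
  assumes "limitin (mtopology_of m) \<sigma> p sequentially"
  shows "(THE p. limitin (mtopology_of m) \<sigma> p sequentially) = p"
proof (rule the_equality)
  fix p' assume "limitin (mtopology_of m) \<sigma> p' sequentially"
  then show "p' = p" using assms Metric_space.limitin_metric_unique[OF Metric_space_mspace_mdist]
    unfolding mtopology_of_def by (metis trivial_limit_sequentially)
qed (fact assms)

(* An open ball meets S iff some slightly smaller closed ball does; this turns
  "hits open balls" into a countable union of "hits closed balls". *)
lemma mball_meets_iff_mcball_meets:
  "S \<inter> mball_of m x r \<noteq> {} \<longleftrightarrow> (\<exists>q::nat. S \<inter> mcball_of m x (r - 1 / Suc q) \<noteq> {})"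
proof
  assume "S \<inter> mball_of m x r \<noteq> {}"
  then obtain t where t: "t \<in> S" "t \<in> mball_of m x r" by blast
  then obtain q where "1 / Suc q < r - mdist m x t" using nat_approx_posE[of "r - mdist m x t"] by auto
  then have "t \<in> S \<inter> mcball_of m x (r - 1 / Suc q)" using t by auto
  then show "\<exists>q::nat. S \<inter> mcball_of m x (r - 1 / Suc q) \<noteq> {}" by blast
next
  assume "\<exists>q::nat. S \<inter> mcball_of m x (r - 1 / Suc q) \<noteq> {}"
  then obtain q t where t: "t \<in> S" "t \<in> mcball_of m x (r - 1 / Suc q)" by blast
  have "(0::real) < 1 / Suc q" by simp
  then have "t \<in> mball_of m x r" using t(2) unfolding in_mcball_of in_mball_of by linarith
  then show "S \<inter> mball_of m x r \<noteq> {}" using t(1) by blast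
qed

lemma limitin_approx_closedin:
  assumes S: "closedin (mtopology_of m) S" and lim: "limitin (mtopology_of m) \<tau> l sequentially"
    and e: "e \<longlonglongrightarrow> 0" and near: "\<And>j. j \<ge> N \<Longrightarrow> \<exists>s\<in>S. mdist m (\<tau> j) s < e j"
  shows "l \<in> S"
proof -
  interpret Metric_space "mspace m" "mdist m" by simp
  have lM: "l \<in> mspace m" using lim limitin_topspace by fastforce
  have "\<exists>s\<in>S. s \<in> mspace m \<and> mdist m l s < \<epsilon>" if "\<epsilon> > 0" for \<epsilon>
  proof -
    have "\<forall>\<^sub>F j in sequentially. \<tau> j \<in> mspace m \<and> mdist m (\<tau> j) l < \<epsilon>/2"
      using lim that unfolding mtopology_of_def limitin_metric by (meson half_gt_zero)
    moreover have "\<forall>\<^sub>F j in sequentially. e j < \<epsilon>/2"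
      by (rule order_tendstoD(2)[OF e]) (use that in simp)
    moreover have "\<forall>\<^sub>F j in sequentially. j \<ge> N" by (rule eventually_ge_at_top)
    ultimately have "\<forall>\<^sub>F j in sequentially.
        \<tau> j \<in> mspace m \<and> mdist m (\<tau> j) l < \<epsilon>/2 \<and> e j < \<epsilon>/2 \<and> j \<ge> N"
      by eventually_elim auto
    then obtain j where j: "\<tau> j \<in> mspace m" "mdist m (\<tau> j) l < \<epsilon>/2" "e j < \<epsilon>/2" "j \<ge> N"
      unfolding eventually_sequentially by blast
    then obtain s where s: "s \<in> S" "mdist m (\<tau> j) s < e j" using near by blast
    have sM: "s \<in> mspace m" using s(1) closedin_subset[OF S] by auto
    have "mdist m l s \<le> mdist m l (\<tau> j) + mdist m (\<tau> j) s" using mdist_triangle lM j(1) sM .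
    then have "mdist m l s < \<epsilon>" using j s(2) mdist_commute[of m l "\<tau> j"] by linarith
    then show ?thesis using s(1) sM by blast
  qed
  then have "l \<in> mtopology_of m closure_of S" by (simp add: mtopology_of_def metric_closure_of lM)
  then show ?thesis using closure_of_closedin[OF S] by simp
qed

lemma limitin_mdist:
  assumes "limitin (mtopology_of m) \<sigma> l sequentially" and "a \<in> mspace m"
  shows "(\<lambda>j. mdist m a (\<sigma> j)) \<longlonglongrightarrow> mdist m a l"
  using continuous_map_limit[OF continuous_on_mdist[OF assms(2)] assms(1)] by (simp add: o_def)

lemma geometric_chain_mdist:
  assumes z: "\<And>j. z j \<in> mspace m" and step: "\<And>j. mdist m (z j) (z (Suc j)) \<le> C / 2^j"
  shows "mdist m (z i) (z (i + n)) \<le> 2*C/2^i - 2*C/2^(i + n)"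
proof (induction n)
  case 0 then show ?case using mdist_zero[OF z[of i] z[of i]] by simp
next
  case (Suc n)
  have "mdist m (z i) (z (i + Suc n)) \<le> mdist m (z i) (z (i + n)) + mdist m (z (i + n)) (z (Suc (i + n)))"
    by (simp add: mdist_triangle z)
  moreover have "2*C/2^(i + n) - C/2^(i + n) = 2*C/2^(i + Suc n)" by (simp add: field_simps)
  ultimately show ?case using Suc.IH step[of "i + n"] by simp
qed

lemma geometric_chain_tail:
  assumes z: "\<And>j. z j \<in> mspace m" and step: "\<And>j. mdist m (z j) (z (Suc j)) \<le> C / 2^j"
    and "i \<le> i'"
  shows "mdist m (z i) (z i') \<le> 2*C/2^i"
proof -
  have "C \<ge> 0" using order_trans[OF mdist_nonneg step[of 0]] by simp
  then have "0 \<le> 2*C/2^i'" by simp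
  then show ?thesis using geometric_chain_mdist[OF z step, of i "i' - i"] \<open>i \<le> i'\<close> by simp
qed

lemma geometric_chain_MCauchy:
  assumes z: "\<And>j. z j \<in> mspace m" and step: "\<And>j. mdist m (z j) (z (Suc j)) \<le> C / 2^j"
  shows "Metric_space.MCauchy (mspace m) (mdist m) z"
  unfolding Metric_space.MCauchy_def[OF Metric_space_mspace_mdist]
proof (intro conjI allI impI)
  show "range z \<subseteq> mspace m" using z by auto
  fix e :: real assume e: "e > 0"
  have C: "C \<ge> 0" using order_trans[OF mdist_nonneg step[of 0]] by simp
  obtain N where N: "2*C/2^N < e"
  proof (cases "C = 0")
    case False
    then obtain N where "(1/2::real)^N < e/(2*C)" using real_arch_pow_inv[of "e/(2*C)" "1/2"] e C by auto
    then show ?thesis using that[of N] C False by (auto simp: field_simps power_divide)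
  qed (use e in auto)
  have "mdist m (z i) (z i') < e" if "N \<le> i" "N \<le> i'" for i i'
  proof -
    have "2*C/2^i \<le> 2*C/2^N" "2*C/2^i' \<le> 2*C/2^N" using that C by (simp_all add: frac_le)
    then show ?thesis
    proof (cases "i \<le> i'")
      case True then show ?thesis using geometric_chain_tail[OF z step True] N \<open>2*C/2^i \<le> 2*C/2^N\<close> by linarith
    next
      case False
      then have "mdist m (z i') (z i) \<le> 2*C/2^i'" using geometric_chain_tail[OF z step] by simp
      then show ?thesis using mdist_commute[of m "z i" "z i'"] N \<open>2*C/2^i' \<le> 2*C/2^N\<close> by linarith
    qed
  qed
  then show "\<exists>N. \<forall>n n'. N \<le> n \<longrightarrow> N \<le> n' \<longrightarrow> mdist m (z n) (z n') < e" by blast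
qed

lemma geometric_chain_converges:
  assumes proper: "proper_metric m"
    and z: "\<And>j. z j \<in> mspace m" and step: "\<And>j. mdist m (z j) (z (Suc j)) \<le> C / 2^j"
  obtains p where "limitin (mtopology_of m) z p sequentially" "mdist m (z 0) p \<le> 2*C"
proof -
  interpret Metric_space "mspace m" "mdist m" by simp
  have "range z \<subseteq> mcball (z 0) (2*C)" using geometric_chain_tail[OF z step, of 0] z by auto
  then obtain p \<rho> where p: "p \<in> mcball (z 0) (2*C)" "strict_mono \<rho>" "limitin mtopology (z \<circ> \<rho>) p sequentially"
    using proper z unfolding proper_metric_def mtopology_of_def mcball_of_def compactin_sequentially by blast
  then have "limitin mtopology z p sequentially"
    using MCauchy_convergent_subsequence[OF geometric_chain_MCauchy[OF z step] p(2,3)] by simp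
  then show ?thesis using that p(1) by (simp add: mtopology_of_def)
qed

(* The greedy chain: starting from a point D (kappa 0) whose rho-ball meets T, choose
  at step j+1 the first D k whose (rho/2^(j+1))-ball still meets T and which is within
  2 rho/2^j of the previous choice.  Density of D keeps this choice always possible. *)
lemma greedy_chain_invariant:
  fixes D :: "nat \<Rightarrow> 'a" and \<kappa> :: "nat \<Rightarrow> nat"
  assumes D_in: "range D \<subseteq> mspace m" and D_dense: "mspace m \<subseteq> mtopology_of m closure_of range D"
    and T: "T \<subseteq> mspace m" and \<rho>: "\<rho> > 0"
    and start: "T \<inter> mball_of m (D (\<kappa> 0)) \<rho> \<noteq> {}"
    and step: "\<And>j. \<kappa> (Suc j) = (LEAST k. T \<inter> mball_of m (D k) (\<rho>/2^Suc j) \<noteq> {} \<and>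
                                     mdist m (D k) (D (\<kappa> j)) < 2*\<rho>/2^j)"
  shows "T \<inter> mball_of m (D (\<kappa> j)) (\<rho>/2^j) \<noteq> {} \<and> mdist m (D (\<kappa> (Suc j))) (D (\<kappa> j)) < 2*\<rho>/2^j"
proof -
  have next_step: "T \<inter> mball_of m (D (\<kappa> (Suc j))) (\<rho>/2^Suc j) \<noteq> {} \<and>
                   mdist m (D (\<kappa> (Suc j))) (D (\<kappa> j)) < 2*\<rho>/2^j"
    if meets: "T \<inter> mball_of m (D (\<kappa> j)) (\<rho>/2^j) \<noteq> {}" for j
  proof -
    define good where "good k \<longleftrightarrow> T \<inter> mball_of m (D k) (\<rho>/2^Suc j) \<noteq> {} \<and>
                                  mdist m (D k) (D (\<kappa> j)) < 2*\<rho>/2^j" for k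
    obtain t where t: "t \<in> T" "mdist m (D (\<kappa> j)) t < \<rho>/2^j" using meets by auto
    have tM: "t \<in> mspace m" using t T by auto
    have "t \<in> mtopology_of m closure_of range D" using D_dense tM by blast
    moreover have "\<rho>/2^Suc j > 0" using \<rho> by simp
    ultimately obtain y where "y \<in> range D" "mdist m t y < \<rho>/2^Suc j"
      by (rule closure_of_mdist_approx)
    then obtain k where k: "mdist m t (D k) < \<rho>/2^Suc j" by blast
    have DkM: "D k \<in> mspace m" "D (\<kappa> j) \<in> mspace m" using D_in by auto
    have "mdist m (D k) (D (\<kappa> j)) \<le> mdist m (D k) t + mdist m t (D (\<kappa> j))"
      using mdist_triangle[OF DkM(1) tM DkM(2)] .
    moreover have "\<rho>/2^Suc j \<le> \<rho>/2^j" using \<rho> by (simp add: frac_le)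
    ultimately have "mdist m (D k) (D (\<kappa> j)) < 2*\<rho>/2^j"
      using k t(2) mdist_commute[of m t] by simp
    moreover have "T \<inter> mball_of m (D k) (\<rho>/2^Suc j) \<noteq> {}"
      using t(1) tM DkM k mdist_commute[of m t "D k"] by auto
    ultimately have "good k" by (simp add: good_def)
    then have "good (LEAST k. good k)" by (rule LeastI)
    then show ?thesis unfolding good_def step[of j] .
  qed
  have "T \<inter> mball_of m (D (\<kappa> j)) (\<rho>/2^j) \<noteq> {}" for j
    by (induction j) (use start next_step in auto)
  then show ?thesis using next_step by blast
qed

(* Consequently the greedy chain converges to a point of the closed set T, within 4 rho of
  its starting point.  This is the fibrewise core of the measurable selection. *)
lemma greedy_chain_limit:
  fixes D :: "nat \<Rightarrow> 'a" and \<kappa> :: "nat \<Rightarrow> nat"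
  assumes proper: "proper_metric m" and T: "closedin (mtopology_of m) T"
    and D_in: "range D \<subseteq> mspace m" and D_dense: "mspace m \<subseteq> mtopology_of m closure_of range D"
    and \<rho>: "\<rho> > 0"
    and start: "T \<inter> mball_of m (D (\<kappa> 0)) \<rho> \<noteq> {}"
    and step: "\<And>j. \<kappa> (Suc j) = (LEAST k. T \<inter> mball_of m (D k) (\<rho>/2^Suc j) \<noteq> {} \<and>
                                     mdist m (D k) (D (\<kappa> j)) < 2*\<rho>/2^j)"
  obtains p where "p \<in> T" "limitin (mtopology_of m) (\<lambda>j. D (\<kappa> j)) p sequentially"
    "mdist m (D (\<kappa> 0)) p \<le> 4*\<rho>"
proof -
  note inv = greedy_chain_invariant[OF D_in D_dense closedin_subset[OF T, simplified] \<rho> start step]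
  have "mdist m (D (\<kappa> j)) (D (\<kappa> (Suc j))) \<le> (2*\<rho>)/2^j" for j
    using inv[of j] mdist_commute[of m "D (\<kappa> j)"] by simp
  then obtain p where lim: "limitin (mtopology_of m) (\<lambda>j. D (\<kappa> j)) p sequentially"
    and dist: "mdist m (D (\<kappa> 0)) p \<le> 2*(2*\<rho>)"
    using geometric_chain_converges[OF proper, of "\<lambda>j. D (\<kappa> j)"] D_in by blast
  have "(\<lambda>j. \<rho> * inverse (2^j)) \<longlonglongrightarrow> 0"
    by (intro tendsto_mult_right_zero LIMSEQ_inverse_realpow_zero) simp
  then have "(\<lambda>j. \<rho>/2^j) \<longlonglongrightarrow> 0" by (simp add: divide_inverse)
  moreover have "\<exists>t\<in>T. mdist m (D (\<kappa> j)) t < \<rho>/2^j" for j using inv[of j] by auto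
  ultimately have "p \<in> T" using limitin_approx_closedin[OF T lim] by blast
  then show ?thesis using that lim dist by simp
qed

(* The intersection of the closed sets F n meets the closed ball B(c,r) iff for every j
  some D k lies within r + 1/(j+1) of c and within 1/(j+1) of every F n with n \<le> j
  (measured through the dense sequences Y n of F n).  The criterion only involves
  countably many distances and is therefore measurable. *)
lemma inter_meets_mcball_imp_approx:
  assumes F_in: "\<And>n. F n \<subseteq> mspace m"
    and Y_in: "\<And>n i. F n \<noteq> {} \<Longrightarrow> Y n i \<in> F n"
    and Y_dense: "\<And>n. F n \<subseteq> mtopology_of m closure_of range (Y n)"
    and D_in: "range D \<subseteq> mspace m" and D_dense: "mspace m \<subseteq> mtopology_of m closure_of range D"
    and c: "c \<in> mspace m" and meets: "(\<Inter>n. F n) \<inter> mcball_of m c r \<noteq> {}"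
  shows "\<exists>k. mdist m (D k) c < r + 1/Suc j \<and>
             (\<forall>n\<in>{..j}. F n \<noteq> {} \<and> (\<exists>i. mdist m (D k) (Y n i) < 1/Suc j))"
proof -
  obtain q where q_F: "\<And>n. q \<in> F n" and q_ball: "q \<in> mcball_of m c r" using meets by blast
  have qM: "q \<in> mspace m" using q_ball by simp
  define e where "e = 1 / (2 * Suc j)"
  have e: "e > 0" "2*e = 1/Suc j" by (auto simp: e_def field_simps)
  have "q \<in> mtopology_of m closure_of range D" using D_dense qM by blast
  then obtain Dk where "Dk \<in> range D" "mdist m q Dk < e" using e(1) by (rule closure_of_mdist_approx)
  then obtain k where k: "mdist m (D k) q < e" by (auto simp: mdist_commute)
  have DkM: "D k \<in> mspace m" using D_in by auto
  have "\<exists>i. mdist m (D k) (Y n i) < 1/Suc j" for n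
  proof -
    have "q \<in> mtopology_of m closure_of range (Y n)" using Y_dense q_F by blast
    then obtain y where "y \<in> range (Y n)" "mdist m q y < e"
      using e(1) by (rule closure_of_mdist_approx)
    then obtain i where i: "mdist m q (Y n i) < e" by blast
    have YM: "Y n i \<in> mspace m" using Y_in[of n i] q_F[of n] F_in by auto
    have "mdist m (D k) (Y n i) \<le> mdist m (D k) q + mdist m q (Y n i)"
      using mdist_triangle[OF DkM qM YM] .
    then have "mdist m (D k) (Y n i) < 1/Suc j" using k i e(2) by linarith
    then show ?thesis by blast
  qed
  moreover have "mdist m (D k) c < r + 1/Suc j"
  proof -
    have "mdist m (D k) c \<le> mdist m (D k) q + mdist m q c" using mdist_triangle[OF DkM qM c] .
    moreover have "mdist m q c \<le> r" using q_ball by (simp add: mdist_commute)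
    ultimately show ?thesis using k e by simp
  qed
  ultimately show ?thesis using q_F by blast
qed

(* The hard direction uses properness: the witnesses D (k j) stay in a compact ball, and
  a limit point of them lies in every F n and in B(c,r). *)
lemma approx_imp_inter_meets_mcball:
  fixes D :: "nat \<Rightarrow> 'a" and Y :: "nat \<Rightarrow> nat \<Rightarrow> 'a"
  assumes proper: "proper_metric m" and closed: "\<And>n. closedin (mtopology_of m) (F n)"
    and Y_in: "\<And>n i. F n \<noteq> {} \<Longrightarrow> Y n i \<in> F n"
    and D_in: "range D \<subseteq> mspace m" and c: "c \<in> mspace m"
    and approx: "\<And>j. \<exists>k. mdist m (D k) c < r + 1/Suc j \<and>
                          (\<forall>n\<in>{..j}. F n \<noteq> {} \<and> (\<exists>i. mdist m (D k) (Y n i) < 1/Suc j))"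
  shows "(\<Inter>n. F n) \<inter> mcball_of m c r \<noteq> {}"
proof -
  obtain k where k_c: "\<And>j. mdist m (D (k j)) c < r + 1/Suc j"
    and k_Y: "\<And>j n. n \<le> j \<Longrightarrow> F n \<noteq> {} \<and> (\<exists>i. mdist m (D (k j)) (Y n i) < 1/Suc j)"
    using approx by (metis atMost_iff)
  define \<sigma> where "\<sigma> = (\<lambda>j. D (k j))"
  have "range \<sigma> \<subseteq> mcball_of m c (r+1)"
  proof clarify
    fix j
    have "1 / real (Suc j) \<le> 1" by simp
    then have "mdist m c (\<sigma> j) \<le> r + 1"
      using k_c[of j] mdist_commute[of m c "D (k j)"] unfolding \<sigma>_def by linarith
    then show "\<sigma> j \<in> mcball_of m c (r+1)" using c D_in by (auto simp: \<sigma>_def)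
  qed
  moreover have "compactin (mtopology_of m) (mcball_of m c (r+1))"
    using proper c unfolding proper_metric_def by blast
  ultimately obtain l \<rho> where l: "strict_mono \<rho>" "limitin (mtopology_of m) (\<sigma> \<circ> \<rho>) l sequentially"
    unfolding mtopology_of_def Metric_space.compactin_sequentially[OF Metric_space_mspace_mdist]
    by blast
  have e0: "(\<lambda>j. 1 / real (Suc (\<rho> j))) \<longlonglongrightarrow> 0"
    using LIMSEQ_subseq_LIMSEQ[OF LIMSEQ_inverse_real_of_nat l(1)] by (simp add: o_def inverse_eq_divide)
  have "mdist m c l \<le> r"
  proof (rule tendsto_le[OF trivial_limit_sequentially])
    show "(\<lambda>j. mdist m c ((\<sigma> \<circ> \<rho>) j)) \<longlonglongrightarrow> mdist m c l" by (rule limitin_mdist[OF l(2) c])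
    show "(\<lambda>j. r + 1 / real (Suc (\<rho> j))) \<longlonglongrightarrow> r" using tendsto_add[OF tendsto_const e0] by simp
    show "\<forall>\<^sub>F j in sequentially. mdist m c ((\<sigma> \<circ> \<rho>) j) \<le> r + 1 / real (Suc (\<rho> j))"
      using k_c mdist_commute[of m c] by (simp add: \<sigma>_def less_imp_le)
  qed
  moreover have "l \<in> F n" for n
  proof (rule limitin_approx_closedin[OF closed l(2) e0])
    fix j assume "j \<ge> n"
    then have "n \<le> \<rho> j" using seq_suble[OF l(1), of j] by linarith
    then obtain i where "F n \<noteq> {}" "mdist m ((\<sigma> \<circ> \<rho>) j) (Y n i) < 1/Suc (\<rho> j)"
      using k_Y by (auto simp: \<sigma>_def)
    then show "\<exists>s\<in>F n. mdist m ((\<sigma> \<circ> \<rho>) j) s < 1/Suc (\<rho> j)" using Y_in by blast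
  qed
  moreover have "l \<in> mspace m" using l(2) limitin_topspace by fastforce
  ultimately have "l \<in> (\<Inter>n. F n) \<inter> mcball_of m c r" using c by simp
  then show ?thesis by blast
qed

lemma inter_meets_mcball_iff:
  fixes D :: "nat \<Rightarrow> 'a" and Y :: "nat \<Rightarrow> nat \<Rightarrow> 'a"
  assumes "proper_metric m" and closed: "\<And>n. closedin (mtopology_of m) (F n)"
    and "\<And>n i. F n \<noteq> {} \<Longrightarrow> Y n i \<in> F n"
    and "\<And>n. F n \<subseteq> mtopology_of m closure_of range (Y n)"
    and "range D \<subseteq> mspace m" and "mspace m \<subseteq> mtopology_of m closure_of range D"
    and "c \<in> mspace m"
  shows "(\<Inter>n. F n) \<inter> mcball_of m c r \<noteq> {} \<longleftrightarrow>
    (\<forall>j. \<exists>k. mdist m (D k) c < r + 1/Suc j \<and>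
              (\<forall>n\<in>{..j}. F n \<noteq> {} \<and> (\<exists>i. mdist m (D k) (Y n i) < 1/Suc j)))"
proof
  have "\<And>n. F n \<subseteq> mspace m" using closedin_subset[OF closed] by fastforce
  then show "\<forall>j. \<exists>k. mdist m (D k) c < r + 1/Suc j \<and>
              (\<forall>n\<in>{..j}. F n \<noteq> {} \<and> (\<exists>i. mdist m (D k) (Y n i) < 1/Suc j))"
    if "(\<Inter>n. F n) \<inter> mcball_of m c r \<noteq> {}"
    using inter_meets_mcball_imp_approx[where F=F and Y=Y and D=D, OF _ assms(3-7) that] by blast
next
  assume approx: "\<forall>j. \<exists>k. mdist m (D k) c < r + 1/Suc j \<and>
              (\<forall>n\<in>{..j}. F n \<noteq> {} \<and> (\<exists>i. mdist m (D k) (Y n i) < 1/Suc j))"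
  show "(\<Inter>n. F n) \<inter> mcball_of m c r \<noteq> {}"
    by (rule approx_imp_inter_meets_mcball[where F=F and Y=Y and D=D, OF assms(1-3,5,7)])
       (use approx in blast)+
qed

lemma borel_structureD:
  assumes "borel_structure M X L"
  shows borel_structure_section: "x \<in> L \<Longrightarrow> is_section M X x"
    and borel_structure_dist: "x \<in> L \<Longrightarrow> y \<in> L \<Longrightarrow> dist_fun X x y \<in> borel_measurable M"
    and borel_structure_saturated:
      "is_section M X y \<Longrightarrow> (\<And>x. x \<in> L \<Longrightarrow> dist_fun X x y \<in> borel_measurable M) \<Longrightarrow> y \<in> L"
  using assms unfolding borel_structure_def by blast+

definition dense_section_sequence ::
  "'w measure \<Rightarrow> ('w \<Rightarrow> 'a metric) \<Rightarrow> ('w \<Rightarrow> 'a) set \<Rightarrow> ('w \<Rightarrow> 'a set) \<Rightarrow> (nat \<Rightarrow> 'w \<Rightarrow> 'a) \<Rightarrow> bool"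
  where "dense_section_sequence M X L A y \<longleftrightarrow> (\<forall>i. y i \<in> L) \<and>
     (\<forall>w\<in>space M. A w \<noteq> {} \<longrightarrow> (\<forall>i. y i w \<in> A w)) \<and>
     (\<forall>w\<in>space M. A w \<subseteq> mtopology_of (X w) closure_of range (\<lambda>i. y i w))"

lemma dense_section_sequenceD:
  assumes "dense_section_sequence M X L A y"
  shows dense_section_sequence_L: "y i \<in> L"
    and dense_section_sequence_in: "w \<in> space M \<Longrightarrow> A w \<noteq> {} \<Longrightarrow> y i w \<in> A w"
    and dense_section_sequence_dense:
      "w \<in> space M \<Longrightarrow> A w \<subseteq> mtopology_of (X w) closure_of range (\<lambda>i. y i w)"
  using assms unfolding dense_section_sequence_def by blast+

lemma borel_structure_no_sections:
  assumes "borel_structure M X {}" and "w \<in> space M"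
  shows "mspace (X w) = {}"
  using assms unfolding borel_structure_def by auto

lemma dense_section_sequence_empty:
  assumes "x \<in> L" and "\<And>w. w \<in> space M \<Longrightarrow> A w = {}"
  shows "dense_section_sequence M X L A (\<lambda>_::nat. x)"
  using assms unfolding dense_section_sequence_def by simp

lemma image_eval_from_nat_into:
  assumes "Y \<noteq> {}" and "countable Y"
  shows "{y w |y. y \<in> Y} = range (\<lambda>i. from_nat_into Y i w)"
proof -
  have "{y w |y. y \<in> Y} = (\<lambda>y. y w) ` range (from_nat_into Y)"
    unfolding range_from_nat_into[OF assms] by blast
  then show ?thesis by (simp add: image_image)
qed

lemma borel_structure_fundamental_sequence:
  assumes L: "borel_structure M X L" and "L \<noteq> {}"
  shows "\<exists>D. dense_section_sequence M X L (\<lambda>w. mspace (X w)) D"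
proof -
  obtain D0 where D0: "countable D0" "D0 \<subseteq> L"
    and dense: "\<And>w. w \<in> space M \<Longrightarrow> mtopology_of (X w) closure_of {x w |x. x \<in> D0} = mspace (X w)"
    using L unfolding borel_structure_def by blast
  show ?thesis
  proof (cases "D0 = {}")
    case True
    then have "mspace (X w) = {}" if "w \<in> space M" for w using dense[OF that] by simp
    moreover obtain x where "x \<in> L" using \<open>L \<noteq> {}\<close> by blast
    ultimately have "dense_section_sequence M X L (\<lambda>w. mspace (X w)) (\<lambda>_::nat. x)"
      by (intro dense_section_sequence_empty)
    then show ?thesis by blast
  next
    case False
    define D where "D = from_nat_into D0"
    have D_L: "D k \<in> L" for k using from_nat_into[OF False] D0(2) by (auto simp: D_def)
    have "dense_section_sequence M X L (\<lambda>w. mspace (X w)) D"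
      unfolding dense_section_sequence_def
    proof (intro conjI ballI allI impI D_L)
      fix w i assume "w \<in> space M"
      then show "D i w \<in> mspace (X w)"
        using borel_structure_section[OF L D_L] unfolding is_section_def by blast
      show "mspace (X w) \<subseteq> mtopology_of (X w) closure_of range (\<lambda>i. D i w)"
        using dense[OF \<open>w \<in> space M\<close>] image_eval_from_nat_into[OF False D0(1)] by (simp add: D_def)
    qed
    then show ?thesis by blast
  qed
qed

lemma borel_subfieldE:
  assumes "borel_subfield M X L A"
  defines "\<Omega>' \<equiv> {w \<in> space M. A w \<noteq> {}}"
  obtains Y where "countable Y" "\<forall>y\<in>Y. \<exists>x\<in>L. \<forall>w\<in>\<Omega>'. y w = x w"
    "\<And>w y. w \<in> \<Omega>' \<Longrightarrow> y \<in> Y \<Longrightarrow> y w \<in> A w"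
    "\<And>w. w \<in> \<Omega>' \<Longrightarrow> A w \<subseteq> mtopology_of (X w) closure_of {y w |y. y \<in> Y}"
proof -
  have "\<exists>Y. countable Y \<and> (\<forall>y\<in>Y. \<exists>x\<in>L. \<forall>w\<in>\<Omega>'. y w = x w) \<and>
      (\<forall>w\<in>\<Omega>'. (\<forall>y\<in>Y. y w \<in> A w) \<and> A w \<subseteq> mtopology_of (X w) closure_of {y w |y. y \<in> Y})"
    using assms(1) unfolding borel_subfield_def Let_def \<Omega>'_def by (elim conjE)
  then obtain Y where "countable Y" "\<forall>y\<in>Y. \<exists>x\<in>L. \<forall>w\<in>\<Omega>'. y w = x w"
    and fibre: "\<forall>w\<in>\<Omega>'. (\<forall>y\<in>Y. y w \<in> A w) \<and> A w \<subseteq> mtopology_of (X w) closure_of {y w |y. y \<in> Y}"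
    by (elim exE conjE)
  moreover have "\<And>w y. w \<in> \<Omega>' \<Longrightarrow> y \<in> Y \<Longrightarrow> y w \<in> A w"
    and "\<And>w. w \<in> \<Omega>' \<Longrightarrow> A w \<subseteq> mtopology_of (X w) closure_of {y w |y. y \<in> Y}"
    using fibre by blast+
  ultimately show ?thesis using that by blast
qed

(* Every Borel subfield admits a dense sequence of Borel sections: enumerate the countable
  family and replace each member by a Borel section agreeing with it on the support. *)
lemma borel_subfield_dense_sequence:
  assumes A: "borel_subfield M X L A" and "L \<noteq> {}"
  shows "\<exists>y. dense_section_sequence M X L A y"
proof -
  define \<Omega>' where "\<Omega>' = {w \<in> space M. A w \<noteq> {}}"
  obtain Y where Y: "countable Y" "\<forall>y\<in>Y. \<exists>x\<in>L. \<forall>w\<in>\<Omega>'. y w = x w"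
    and Y_in: "\<And>w y. w \<in> \<Omega>' \<Longrightarrow> y \<in> Y \<Longrightarrow> y w \<in> A w"
    and Y_dense: "\<And>w. w \<in> \<Omega>' \<Longrightarrow> A w \<subseteq> mtopology_of (X w) closure_of {y w |y. y \<in> Y}"
    using borel_subfieldE[OF A] unfolding \<Omega>'_def by blast
  show ?thesis
  proof (cases "Y = {}")
    case True
    then have "{y w |y. y \<in> Y} = {}" for w by simp
    then have "A w = {}" if "w \<in> space M" for w
      using Y_dense[of w] that unfolding \<Omega>'_def by auto
    moreover obtain x where "x \<in> L" using \<open>L \<noteq> {}\<close> by blast
    ultimately have "dense_section_sequence M X L A (\<lambda>_::nat. x)" by (intro dense_section_sequence_empty)
    then show ?thesis by blast
  next
    case False
    define y where "y i = (SOME x. x \<in> L \<and> (\<forall>w\<in>\<Omega>'. from_nat_into Y i w = x w))" for i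
    have y: "y i \<in> L \<and> (\<forall>w\<in>\<Omega>'. from_nat_into Y i w = y i w)" for i
    proof -
      have "\<exists>x. x \<in> L \<and> (\<forall>w\<in>\<Omega>'. from_nat_into Y i w = x w)"
        using Y(2) from_nat_into[OF False] by blast
      then show ?thesis unfolding y_def by (rule someI_ex)
    qed
    have "dense_section_sequence M X L A y"
      unfolding dense_section_sequence_def
    proof (intro conjI ballI allI impI)
      show "y i \<in> L" for i using y by blast
      fix w assume w: "w \<in> space M"
      show "y i w \<in> A w" if "A w \<noteq> {}" for i
        using Y_in[of w, OF _ from_nat_into[OF False]] y w that by (simp add: \<Omega>'_def)
      show "A w \<subseteq> mtopology_of (X w) closure_of range (\<lambda>i. y i w)"
      proof (cases "w \<in> \<Omega>'")
        case True
        then have "range (\<lambda>i. y i w) = {x w |x. x \<in> Y}"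
          using image_eval_from_nat_into[OF False Y(1)] y by simp
        then show ?thesis using Y_dense[OF True] by simp
      qed (use w in \<open>simp add: \<Omega>'_def\<close>)
    qed
    then show ?thesis by blast
  qed
qed

lemma empty_borel_subfield:
  assumes "\<And>w. w \<in> space M \<Longrightarrow> A w = {}"
  shows "borel_subfield M X L A"
proof -
  have empty: "{w \<in> space M. A w \<noteq> {}} = {}" using assms by auto
  show ?thesis unfolding borel_subfield_def Let_def empty using assms by (auto intro!: exI[of _ "{}"])
qed

lemma borel_structure_glue:
  fixes s :: "'i::countable \<Rightarrow> 'w \<Rightarrow> 'a" and \<kappa> :: "'w \<Rightarrow> 'i"
  assumes L: "borel_structure M X L" and s: "\<And>k. s k \<in> L"
    and \<kappa>: "\<kappa> \<in> M \<rightarrow>\<^sub>M count_space UNIV"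
  shows "(\<lambda>w. s (\<kappa> w) w) \<in> L"
proof (rule borel_structure_saturated[OF L])
  show "is_section M X (\<lambda>w. s (\<kappa> w) w)"
    using borel_structure_section[OF L s] unfolding is_section_def by blast
  fix x assume x: "x \<in> L"
  have "(\<lambda>w. (\<lambda>k w. dist_fun X x (s k) w) (\<kappa> w) w) \<in> borel_measurable M"
    by (rule measurable_compose_countable[OF _ \<kappa>]) (use borel_structure_dist[OF L x s] in simp)
  then show "dist_fun X x (\<lambda>w. s (\<kappa> w) w) \<in> borel_measurable M" by (simp add: dist_fun_def)
qed

lemma borel_structure_limit:
  assumes L: "borel_structure M X L" and s: "\<And>j. s j \<in> L"
    and lim: "\<And>w. w \<in> space M \<Longrightarrow> limitin (mtopology_of (X w)) (\<lambda>j. s j w) (t w) sequentially"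
  shows "t \<in> L"
proof (rule borel_structure_saturated[OF L])
  show "is_section M X t"
    unfolding is_section_def using lim limitin_topspace by fastforce
  fix x assume x: "x \<in> L"
  have conv: "(\<lambda>j. dist_fun X x (s j) w) \<longlonglongrightarrow> dist_fun X x t w" if "w \<in> space M" for w
    using limitin_mdist[OF lim[OF that]] borel_structure_section[OF L x] that
    unfolding is_section_def dist_fun_def by blast
  show "dist_fun X x t \<in> borel_measurable M"
    by (rule borel_measurable_LIMSEQ_real[OF conv borel_structure_dist[OF L x s]])
qed

lemma borel_subfield_support:
  assumes "borel_subfield M X L A"
  shows "{w \<in> space M. A w \<noteq> {}} \<in> sets M"
  using assms unfolding borel_subfield_def Let_def by blast

lemma inter_hits_mcball_measurable:
  fixes F :: "nat \<Rightarrow> 'w \<Rightarrow> 'a set" and c :: "'w \<Rightarrow> 'a"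
  assumes L: "borel_structure M X L" and proper: "\<And>w. w \<in> space M \<Longrightarrow> proper_metric (X w)"
    and F: "\<And>n. borel_subfield M X L (F n)"
    and closed: "\<And>n w. w \<in> space M \<Longrightarrow> closedin (mtopology_of (X w)) (F n w)"
    and c: "c \<in> L"
  shows "Measurable.pred M (\<lambda>w. (\<Inter>n. F n w) \<inter> mcball_of (X w) (c w) r \<noteq> {})"
proof -
  have "L \<noteq> {}" using c by blast
  then obtain D where D: "dense_section_sequence M X L (\<lambda>w. mspace (X w)) D"
    using borel_structure_fundamental_sequence[OF L] by blast
  have "\<forall>n. \<exists>y. dense_section_sequence M X L (F n) y"
    using borel_subfield_dense_sequence[OF F \<open>L \<noteq> {}\<close>] by blast
  then obtain Y where Y: "\<And>n. dense_section_sequence M X L (F n) (Y n)"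
    by (metis choice)
  define approx where "approx w \<longleftrightarrow> (\<forall>j. \<exists>k. dist_fun X (D k) c w < r + 1 / real (Suc j) \<and>
      (\<forall>n\<in>{..j}. w \<in> {w \<in> space M. F n w \<noteq> {}} \<and>
                    (\<exists>i. dist_fun X (D k) (Y n i) w < 1 / real (Suc j))))" for w
  have [measurable]: "dist_fun X (D k) c \<in> borel_measurable M" "dist_fun X (D k) (Y n i) \<in> borel_measurable M"
    "{w \<in> space M. F n w \<noteq> {}} \<in> sets M" for k n i
    using borel_structure_dist[OF L] dense_section_sequence_L[OF D] dense_section_sequence_L[OF Y] c
      borel_subfield_support[OF F] by blast+
  have approx_measurable: "Measurable.pred M approx" unfolding approx_def by measurable
  have approx_iff: "approx w \<longleftrightarrow> (\<Inter>n. F n w) \<inter> mcball_of (X w) (c w) r \<noteq> {}" if w: "w \<in> space M" for w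
  proof -
    have D_in: "range (\<lambda>k. D k w) \<subseteq> mspace (X w)"
      using borel_structure_section[OF L dense_section_sequence_L[OF D]] w unfolding is_section_def by blast
    have cw: "c w \<in> mspace (X w)" using borel_structure_section[OF L c] w unfolding is_section_def by blast
    have F_closed: "\<And>n. closedin (mtopology_of (X w)) (F n w)" using closed[OF w] .
    have Y_in: "\<And>n i. F n w \<noteq> {} \<Longrightarrow> Y n i w \<in> F n w"
      and Y_dense: "\<And>n. F n w \<subseteq> mtopology_of (X w) closure_of range (\<lambda>i. Y n i w)"
      using dense_section_sequence_in[OF Y w] dense_section_sequence_dense[OF Y w] by blast+
    show ?thesis
      using inter_meets_mcball_iff[where F="\<lambda>n. F n w" and Y="\<lambda>n i. Y n i w" and D="\<lambda>k. D k w",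
          OF proper[OF w] F_closed Y_in Y_dense D_in dense_section_sequence_dense[OF D w] cw] w
      by (simp add: approx_def dist_fun_def)
  qed
  show ?thesis by (rule measurable_cong[THEN iffD1, OF approx_iff approx_measurable])
qed

(* The selection argument (Kuratowski--Ryll-Nardzewski style): a closed subfield G of a
  Borel field of proper spaces whose hitting sets of closed balls around Borel sections
  are measurable is a Borel subfield. *)
locale closed_field_selection =
  fixes M :: "'w measure" and X :: "'w \<Rightarrow> 'a metric" and L :: "('w \<Rightarrow> 'a) set"
    and G :: "'w \<Rightarrow> 'a set" and D :: "nat \<Rightarrow> 'w \<Rightarrow> 'a"
  assumes borel: "borel_structure M X L"
    and proper: "\<And>w. w \<in> space M \<Longrightarrow> proper_metric (X w)"
    and closed: "\<And>w. w \<in> space M \<Longrightarrow> closedin (mtopology_of (X w)) (G w)"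
    and hits_measurable: "\<And>c r. c \<in> L \<Longrightarrow> Measurable.pred M (\<lambda>w. G w \<inter> mcball_of (X w) (c w) r \<noteq> {})"
    and fundamental: "dense_section_sequence M X L (\<lambda>w. mspace (X w)) D"
begin

lemma D_L: "D k \<in> L"
  using dense_section_sequence_L[OF fundamental] .

lemma D_in: "w \<in> space M \<Longrightarrow> D k w \<in> mspace (X w)"
  using borel_structure_section[OF borel D_L] unfolding is_section_def by blast

lemma G_in: "w \<in> space M \<Longrightarrow> G w \<subseteq> mspace (X w)"
  using closedin_subset[OF closed] by fastforce

lemma D_near:
  assumes "w \<in> space M" "x \<in> mspace (X w)" "r > 0"
  obtains k where "x \<in> mball_of (X w) (D k w) r"
proof -
  have "x \<in> mtopology_of (X w) closure_of range (\<lambda>k. D k w)"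
    using dense_section_sequence_dense[OF fundamental assms(1)] assms(2) by blast
  then obtain y where "y \<in> range (\<lambda>k. D k w)" "mdist (X w) x y < r"
    using assms(3) by (rule closure_of_mdist_approx)
  then show ?thesis using that assms D_in by (auto simp: mdist_commute)
qed

definition meets :: "nat \<Rightarrow> real \<Rightarrow> 'w \<Rightarrow> bool"
  where "meets k r w \<longleftrightarrow> G w \<inter> mball_of (X w) (D k w) r \<noteq> {}"

lemma meets_measurable [measurable]: "Measurable.pred M (meets k r)"
proof -
  have [measurable]: "Measurable.pred M (\<lambda>w. G w \<inter> mcball_of (X w) (D k w) s \<noteq> {})" for s
    using hits_measurable[OF D_L] .
  have "Measurable.pred M (\<lambda>w. \<exists>q::nat. G w \<inter> mcball_of (X w) (D k w) (r - 1 / Suc q) \<noteq> {})"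
    by measurable
  then show ?thesis unfolding meets_def mball_meets_iff_mcball_meets .
qed

definition support :: "'w set"
  where "support = {w \<in> space M. G w \<noteq> {}}"

lemma meets_somewhere:
  assumes "w \<in> support" and "r > 0"
  shows "\<exists>k. meets k r w"
proof -
  obtain t where t: "t \<in> G w" and w: "w \<in> space M" using assms(1) by (auto simp: support_def)
  then obtain k where "t \<in> mball_of (X w) (D k w) r" using D_near G_in assms(2) by blast
  then have "t \<in> G w \<inter> mball_of (X w) (D k w) r" using t by blast
  then show ?thesis unfolding meets_def by blast
qed

lemma support_measurable [measurable]: "support \<in> sets M"
proof -
  have "support = {w \<in> space M. \<exists>k. meets k 1 w}"
    using meets_somewhere[of _ 1] by (auto simp: support_def meets_def)
  also have "\<dots> \<in> sets M" by measurable
  finally show ?thesis .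
qed

definition start :: "nat \<Rightarrow> real \<Rightarrow> 'w \<Rightarrow> nat"
  where "start k \<rho> w = (if meets k \<rho> w then k else LEAST k'. meets k' \<rho> w)"

lemma start_meets: "w \<in> support \<Longrightarrow> \<rho> > 0 \<Longrightarrow> meets (start k \<rho> w) \<rho> w"
  using LeastI_ex[OF meets_somewhere] by (simp add: start_def)

lemma start_measurable [measurable]: "start k \<rho> \<in> M \<rightarrow>\<^sub>M count_space UNIV"
  unfolding start_def by measurable

(* The greedy chain of indices, defined fibrewise; each step is a LEAST over a measurable
  predicate and hence measurable. *)
primrec chain :: "nat \<Rightarrow> real \<Rightarrow> nat \<Rightarrow> 'w \<Rightarrow> nat"
  where
    "chain k \<rho> 0 w = start k \<rho> w"
  | "chain k \<rho> (Suc j) w = (LEAST k'. meets k' (\<rho>/2^Suc j) w \<and>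
                              mdist (X w) (D k' w) (D (chain k \<rho> j w) w) < 2*\<rho>/2^j)"

lemma chain_measurable [measurable]: "chain k \<rho> j \<in> M \<rightarrow>\<^sub>M count_space UNIV"
proof (induction j)
  case (Suc j)
  have "Measurable.pred M (\<lambda>w. (\<lambda>k'' w. dist_fun X (D k') (D k'') w < 2*\<rho>/2^j) (chain k \<rho> j w) w)" for k'
    by (rule measurable_compose_countable[OF _ Suc.IH])
       (use borel_structure_dist[OF borel D_L D_L] in measurable)
  then have [measurable]: "Measurable.pred M (\<lambda>w. mdist (X w) (D k' w) (D (chain k \<rho> j w) w) < 2*\<rho>/2^j)" for k'
    by (simp add: dist_fun_def)
  show ?case by (simp del: power_Suc) measurable
qed simp

lemma chain_converges:
  assumes "w \<in> support" and "\<rho> > 0"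
  obtains p where "p \<in> G w" "limitin (mtopology_of (X w)) (\<lambda>j. D (chain k \<rho> j w) w) p sequentially"
    "mdist (X w) (D (start k \<rho> w) w) p \<le> 4*\<rho>"
proof -
  have w: "w \<in> space M" using assms(1) by (simp add: support_def)
  have D_range: "range (\<lambda>k. D k w) \<subseteq> mspace (X w)" using D_in[OF w] by blast
  show ?thesis
  proof (rule greedy_chain_limit[where \<kappa>="\<lambda>j. chain k \<rho> j w", OF proper[OF w] closed[OF w] D_range
        dense_section_sequence_dense[OF fundamental w] assms(2)])
    show "G w \<inter> mball_of (X w) (D (chain k \<rho> 0 w) w) \<rho> \<noteq> {}"
      using start_meets[OF assms] by (simp add: meets_def)
    show "chain k \<rho> (Suc j) w = (LEAST k'. G w \<inter> mball_of (X w) (D k' w) (\<rho>/2^Suc j) \<noteq> {} \<and>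
            mdist (X w) (D k' w) (D (chain k \<rho> j w) w) < 2*\<rho>/2^j)" for j
      by (simp add: meets_def del: power_Suc)
  qed (use that in simp)
qed

definition approx :: "nat \<Rightarrow> real \<Rightarrow> nat \<Rightarrow> 'w \<Rightarrow> 'a"
  where "approx k \<rho> j w = D (if w \<in> support then chain k \<rho> j w else 0) w"

definition selection :: "nat \<Rightarrow> real \<Rightarrow> 'w \<Rightarrow> 'a"
  where "selection k \<rho> w = (THE p. limitin (mtopology_of (X w)) (\<lambda>j. approx k \<rho> j w) p sequentially)"

lemma selection_in_support:
  assumes "w \<in> support" and "\<rho> > 0"
  shows "selection k \<rho> w \<in> G w"
    and "limitin (mtopology_of (X w)) (\<lambda>j. approx k \<rho> j w) (selection k \<rho> w) sequentially"
    and "mdist (X w) (D (start k \<rho> w) w) (selection k \<rho> w) \<le> 4*\<rho>"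
proof -
  obtain p where p: "p \<in> G w" "limitin (mtopology_of (X w)) (\<lambda>j. D (chain k \<rho> j w) w) p sequentially"
    "mdist (X w) (D (start k \<rho> w) w) p \<le> 4*\<rho>"
    using chain_converges[OF assms] .
  have lim: "limitin (mtopology_of (X w)) (\<lambda>j. approx k \<rho> j w) p sequentially"
    using p(2) assms(1) by (simp add: approx_def)
  then have "selection k \<rho> w = p" unfolding selection_def by (rule limitin_The)
  then show "selection k \<rho> w \<in> G w"
    and "limitin (mtopology_of (X w)) (\<lambda>j. approx k \<rho> j w) (selection k \<rho> w) sequentially"
    and "mdist (X w) (D (start k \<rho> w) w) (selection k \<rho> w) \<le> 4*\<rho>"
    using p lim by simp_all
qed

lemma selection_limit:
  assumes "w \<in> space M" and "\<rho> > 0"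
  shows "limitin (mtopology_of (X w)) (\<lambda>j. approx k \<rho> j w) (selection k \<rho> w) sequentially"
proof (cases "w \<in> support")
  case True
  then show ?thesis using selection_in_support(2)[OF True assms(2)] by simp
next
  case False
  then have "limitin (mtopology_of (X w)) (\<lambda>j. approx k \<rho> j w) (D 0 w) sequentially"
    using D_in[OF assms(1)] by (simp add: approx_def)
  moreover from this have "selection k \<rho> w = D 0 w" unfolding selection_def by (rule limitin_The)
  ultimately show ?thesis by simp
qed

(* Each selection is a Borel section, as a limit of glued Borel sections. *)
lemma selection_L: "\<rho> > 0 \<Longrightarrow> selection k \<rho> \<in> L"
proof (rule borel_structure_limit[OF borel _ selection_limit])
  fix j
  have "(\<lambda>w. if w \<in> support then chain k \<rho> j w else 0) \<in> M \<rightarrow>\<^sub>M count_space UNIV" by measurable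
  from borel_structure_glue[OF borel D_L this] show "approx k \<rho> j \<in> L"
    unfolding approx_def[abs_def] .
qed

definition selections :: "('w \<Rightarrow> 'a) set"
  where "selections = (\<lambda>(k, m). selection k (1 / Suc m)) ` UNIV"

(* The selections are dense in every nonempty fibre: near q in G w pick D k within rho,
  then the selection started at k is within 5 rho of q. *)
lemma selections_dense:
  assumes "w \<in> support"
  shows "G w \<subseteq> mtopology_of (X w) closure_of {y w |y. y \<in> selections}"
proof
  fix q assume q: "q \<in> G w"
  have w: "w \<in> space M" using assms by (simp add: support_def)
  have sel_G: "selection k (1 / Suc m) w \<in> G w" for k m
    using selection_in_support(1)[OF assms] by simp
  show "q \<in> mtopology_of (X w) closure_of {y w |y. y \<in> selections}"
  proof (rule in_closure_of_mdist)
    show "q \<in> mspace (X w)" using q G_in[OF w] by blast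
    show "{y w |y. y \<in> selections} \<subseteq> mspace (X w)"
      using sel_G G_in[OF w] by (auto simp: selections_def)
    fix e :: real assume e: "e > 0"
    obtain m :: nat where m: "1 / Suc m < e/5" using nat_approx_posE[of "e/5"] e by auto
    define \<rho> where "\<rho> = 1 / real (Suc m)"
    have \<rho>: "\<rho> > 0" by (simp add: \<rho>_def)
    obtain k where k: "q \<in> mball_of (X w) (D k w) \<rho>"
      using D_near[OF w _ \<rho>] q G_in[OF w] by blast
    then have "meets k \<rho> w" using q by (auto simp: meets_def)
    then have "start k \<rho> w = k" by (simp add: start_def)
    then have sel_near: "mdist (X w) (D k w) (selection k \<rho> w) \<le> 4*\<rho>"
      using selection_in_support(3)[OF assms \<rho>, of k] by simp
    have "mdist (X w) q (selection k \<rho> w) \<le> mdist (X w) q (D k w) + mdist (X w) (D k w) (selection k \<rho> w)"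
      using mdist_triangle[OF _ D_in[OF w]] q G_in[OF w] sel_G[of k m] by (simp add: \<rho>_def subset_iff)
    also have "\<dots> < e" using k sel_near m by (simp add: mdist_commute \<rho>_def)
    finally have "mdist (X w) q (selection k \<rho> w) < e" .
    moreover have "selection k \<rho> \<in> selections"
      unfolding selections_def \<rho>_def by (rule image_eqI[of _ _ "(k, m)"]) simp_all
    then have "selection k \<rho> w \<in> {y w |y. y \<in> selections}" by blast
    ultimately show "\<exists>y\<in>{y w |y. y \<in> selections}. mdist (X w) q y < e" by blast
  qed
qed

theorem borel_subfield: "borel_subfield M X L G"
  unfolding borel_subfield_def Let_def support_def[symmetric]
proof (intro conjI ballI exI[of _ selections])
  show "G w \<subseteq> mspace (X w)" if "w \<in> space M" for w using G_in[OF that] .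
  show "support \<in> sets M" by measurable
  show "countable selections" by (simp add: selections_def)
  show "\<exists>x\<in>L. \<forall>w\<in>support. y w = x w" if "y \<in> selections" for y
    using that selection_L by (auto simp: selections_def)
  show "y w \<in> G w" if "w \<in> support" "y \<in> selections" for w y
    using that selection_in_support(1) by (auto simp: selections_def)
  show "G w \<subseteq> mtopology_of (X w) closure_of {y w |y. y \<in> selections}" if "w \<in> support" for w
    using selections_dense[OF that] .
qed

end

theorem borel_subfield_if_hits_measurable:
  assumes L: "borel_structure M X L" and proper: "\<And>w. w \<in> space M \<Longrightarrow> proper_metric (X w)"
    and closed: "\<And>w. w \<in> space M \<Longrightarrow> closedin (mtopology_of (X w)) (G w)"
    and hits: "\<And>c r. c \<in> L \<Longrightarrow> Measurable.pred M (\<lambda>w. G w \<inter> mcball_of (X w) (c w) r \<noteq> {})"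
  shows "borel_subfield M X L G"
proof (cases "L = {}")
  case True
  have "G w = {}" if "w \<in> space M" for w
    using closedin_subset[OF closed[OF that]] borel_structure_no_sections[OF L[unfolded True] that] by simp
  then show ?thesis by (rule empty_borel_subfield)
next
  case False
  then obtain D where "dense_section_sequence M X L (\<lambda>w. mspace (X w)) D"
    using borel_structure_fundamental_sequence[OF L] by blast
  then interpret closed_field_selection M X L G D
    using L proper closed hits by unfold_locales
  show ?thesis by (rule borel_subfield)
qed

theorem mainTheorem7:
  fixes M :: "'w measure" and X :: "'w \<Rightarrow> 'a metric"
    and L :: "('w \<Rightarrow> 'a) set" and F :: "nat \<Rightarrow> 'w \<Rightarrow> 'a set"
  assumes "borel_structure M X L"
    and "\<forall>w\<in>space M. proper_metric (X w)"
    and "\<forall>n. borel_subfield M X L (F n)"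
    and "\<forall>n. \<forall>w\<in>space M. closedin (mtopology_of (X w)) (F n w)"
  shows "borel_subfield M X L (\<lambda>w. \<Inter>n. F n w)"
proof (rule borel_subfield_if_hits_measurable[OF assms(1)])
  show "proper_metric (X w)" if "w \<in> space M" for w using assms(2) that by blast
  show "closedin (mtopology_of (X w)) (\<Inter>n. F n w)" if "w \<in> space M" for w
    using assms(4) that by (intro closedin_Inter) auto
  show "Measurable.pred M (\<lambda>w. (\<Inter>n. F n w) \<inter> mcball_of (X w) (c w) r \<noteq> {})" if "c \<in> L" for c r
    using inter_hits_mcball_measurable[OF assms(1) _ _ _ that] assms(2-4) by blast
qed

end
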